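(* The topological entropy of any self-induced minimal Cantor system is either $0$ or $+\infty$.
   Context: A minimal Cantor system $(X,T)$ ($X$ a Cantor set, $T$ a homeomorphism with all orbits dense) is self-induced if there is a nonempty clopen proper subset $U\subsetneq X$ such that the induced system $(U,T_U)$, $T_U(x)=T^{r_U(x)}x$ with $r_U(x)=\inf\{n>0:T^nx\in U\}$, is topologically conjugate to $(X,T)$. *)

theory Defs
  imports "HOL-Analysis.Analysis"
begin

definition cantor_set :: "'a::metric_space set \<Rightarrow> bool" where
  "cantor_set X \<longleftrightarrow> X \<noteq> {} \<and> compact X \<and> (\<forall>x\<in>X. x islimpt X) \<and>
     (\<forall>x\<in>X. connected_component_set X x = {x})"

definition orbit :: "'a set \<Rightarrow> ('a \<Rightarrow> 'a) \<Rightarrow> 'a \<Rightarrow> 'a set" where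
  "orbit X T x = {(T ^^ n) x | n. True} \<union> {(inv_into X T ^^ n) x | n. True}"

definition minimal_cantor_system :: "'a::metric_space set \<Rightarrow> ('a \<Rightarrow> 'a) \<Rightarrow> bool" where
  "minimal_cantor_system X T \<longleftrightarrow> cantor_set X \<and> (\<exists>S. homeomorphism X X T S) \<and>
     (\<forall>x\<in>X. closure (orbit X T x) = X)"

definition return_time :: "'a set \<Rightarrow> ('a \<Rightarrow> 'a) \<Rightarrow> 'a \<Rightarrow> nat" where
  "return_time U T x = (LEAST n. n > 0 \<and> (T ^^ n) x \<in> U)"

definition induced_map :: "'a set \<Rightarrow> ('a \<Rightarrow> 'a) \<Rightarrow> 'a \<Rightarrow> 'a" where
  "induced_map U T x = (T ^^ return_time U T x) x"

definition top_conjugate :: "'a::topological_space set \<Rightarrow> ('a \<Rightarrow> 'a) \<Rightarrow> 'b::topological_space set \<Rightarrow> ('b \<Rightarrow> 'b) \<Rightarrow> bool" where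
  "top_conjugate X T Y S \<longleftrightarrow> (\<exists>h g. homeomorphism X Y h g \<and> (\<forall>x\<in>X. h (T x) = S (h x)))"

definition self_induced :: "'a::metric_space set \<Rightarrow> ('a \<Rightarrow> 'a) \<Rightarrow> bool" where
  "self_induced X T \<longleftrightarrow> (\<exists>U. U \<noteq> {} \<and> U \<subset> X \<and>
     openin (top_of_set X) U \<and> closedin (top_of_set X) U \<and>
     top_conjugate U (induced_map U T) X T)"

definition separated_set :: "'a::metric_space set \<Rightarrow> ('a \<Rightarrow> 'a) \<Rightarrow> nat \<Rightarrow> real \<Rightarrow> 'a set \<Rightarrow> bool" where
  "separated_set X T n \<epsilon> E \<longleftrightarrow> E \<subseteq> X \<and>
     (\<forall>x\<in>E. \<forall>y\<in>E. x \<noteq> y \<longrightarrow> (\<exists>k<n. dist ((T ^^ k) x) ((T ^^ k) y) > \<epsilon>))"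

definition top_entropy :: "'a::metric_space set \<Rightarrow> ('a \<Rightarrow> 'a) \<Rightarrow> ereal" where
  "top_entropy X T =
     (SUP \<epsilon> \<in> {0<..}. limsup (\<lambda>n. (SUP E \<in> {E. finite E \<and> E \<noteq> {} \<and> separated_set X T n \<epsilon> E}.
                                    ereal (ln (real (card E)) / real n))))"

end

theory Submission
  imports Defs
begin

(*
  Let U be a clopen set whose induced system (U, T_U) is conjugate to (X, T); then both have
  the same entropy h. By minimality, every orbit returns to U within N steps and leaves U
  within M steps, so any M consecutive returns to U take at least M + 1 steps of T: in n steps
  of T there are only about n M / (M + 1) steps of T_U. As U is clopen, two orbits that stay
  close visit U at the same times, so a separated set of T, pushed into U at the cost of a
  factor N, is separated for T_U over that shorter time. Hence h <= M / (M + 1) * h, which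
  leaves only h = 0 or h = infinity.
*)

section \<open>Entropy through separated sets\<close>

definition separated_sets :: "'a::metric_space set \<Rightarrow> ('a \<Rightarrow> 'a) \<Rightarrow> real \<Rightarrow> nat \<Rightarrow> 'a set set" where
  "separated_sets X T \<epsilon> n = {E. finite E \<and> E \<noteq> {} \<and> separated_set X T n \<epsilon> E}"

definition log_card_rate :: "(nat \<Rightarrow> 'a set set) \<Rightarrow> nat \<Rightarrow> ereal" where
  "log_card_rate A n = (SUP E\<in>A n. ereal (ln (real (card E)) / real n))"

lemma top_entropy_eq_log_card_rate:
  "top_entropy X T = (SUP \<epsilon>\<in>{0<..}. limsup (log_card_rate (separated_sets X T \<epsilon>)))"
  by (simp only: top_entropy_def log_card_rate_def[abs_def] separated_sets_def)

lemma separated_set_subset: "separated_set X T n \<epsilon> E \<Longrightarrow> E' \<subseteq> E \<Longrightarrow> separated_set X T n \<epsilon> E'"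
  unfolding separated_set_def by (simp add: subset_iff)

lemma separated_set_mono: "separated_set X T n \<epsilon> E \<Longrightarrow> \<delta> \<le> \<epsilon> \<Longrightarrow> separated_set X T n \<delta> E"
  unfolding separated_set_def by (simp add: Bex_def) (meson le_less_trans)

lemma top_entropy_nonneg:
  assumes "X \<noteq> {}"
  shows "0 \<le> top_entropy X T"
proof -
  obtain x where x: "x \<in> X" using assms by blast
  have "0 \<le> log_card_rate (separated_sets X T 1) n" for n
  proof -
    have "{x} \<in> separated_sets X T 1 n"
      using x by (simp add: separated_sets_def separated_set_def)
    then show ?thesis
      unfolding log_card_rate_def by (rule SUP_upper2) (simp add: zero_ereal_def)
  qed
  then have "0 \<le> limsup (log_card_rate (separated_sets X T 1))"
    by (intro le_Limsup always_eventually) simp_all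
  also have "\<dots> \<le> top_entropy X T"
    unfolding top_entropy_eq_log_card_rate by (rule SUP_upper) simp
  finally show ?thesis .
qed

lemma log_card_rate_le_of_transfer:
  fixes A :: "nat \<Rightarrow> 'a set set" and B :: "nat \<Rightarrow> 'b set set" and C M D m :: nat and c :: real
  assumes "1 \<le> m" "1 \<le> M" "0 < D" "0 \<le> c"
    and B_lt: "log_card_rate B ((m div D + 1) * M) < ereal c"
    and transfer: "\<And>E. E \<in> A m \<Longrightarrow> \<exists>F\<in>B ((m div D + 1) * M). 0 < card E \<and> card E \<le> C * card F"
  shows "log_card_rate A m \<le> ereal (ln C / m + c * M / D + c * M / m)"
  unfolding log_card_rate_def
proof (rule SUP_least)
  fix E assume "E \<in> A m"
  define q where "q = m div D + 1"
  obtain F where F: "F \<in> B (q * M)" "0 < card E" "card E \<le> C * card F"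
    using transfer \<open>E \<in> A m\<close> by (auto simp: q_def)
  have "0 < q * M"
    using \<open>1 \<le> M\<close> by (simp add: q_def)
  have "ereal (ln (card F) / (q * M)) \<le> log_card_rate B (q * M)"
    unfolding log_card_rate_def using F(1) by (rule SUP_upper)
  also have "\<dots> < ereal c" using B_lt by (simp add: q_def)
  finally have lnF: "ln (card F) < c * (q * M)"
    using \<open>0 < q * M\<close> by (simp add: divide_less_eq)
  have "0 < C" "0 < card F" using F(2,3) by (auto intro: gr0I)
  then have "ln (card E) \<le> ln (C * card F)"
    using F(2,3) by (subst ln_le_cancel_iff) (auto simp flip: of_nat_mult)
  also have "\<dots> = ln C + ln (card F)"
    using \<open>0 < C\<close> \<open>0 < card F\<close> by (simp add: ln_mult)
  also have "\<dots> \<le> ln C + c * M * (m / D + 1)"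
  proof -
    have "real q \<le> m / D + 1"
      using of_nat_div_le_of_nat[of m D] by (simp add: q_def)
    then have "c * M * q \<le> c * M * (m / D + 1)"
      using \<open>0 \<le> c\<close> by (intro mult_left_mono) simp_all
    then show ?thesis using lnF by (simp add: ac_simps)
  qed
  finally have "ln (card E) / m \<le> (ln C + c * M * (m / D + 1)) / m"
    using \<open>1 \<le> m\<close> by (intro divide_right_mono) auto
  also have "\<dots> = ln C / m + c * M / D + c * M / m"
    using \<open>1 \<le> m\<close> \<open>0 < D\<close> by (simp add: field_simps)
  finally show "ereal (ln (card E) / m) \<le> ereal (ln C / m + c * M / D + c * M / m)" by simp
qed

lemma limsup_log_card_rate_le:
  fixes A :: "nat \<Rightarrow> 'a set set" and B :: "nat \<Rightarrow> 'b set set" and C M D :: nat and c :: real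
  assumes "1 \<le> M" "0 < D" "0 \<le> c"
    and B_lt: "limsup (log_card_rate B) < ereal c"
    and transfer: "\<And>m E. 1 \<le> m \<Longrightarrow> E \<in> A m \<Longrightarrow>
                     \<exists>F\<in>B ((m div D + 1) * M). 0 < card E \<and> card E \<le> C * card F"
  shows "limsup (log_card_rate A) \<le> ereal (c * M / D)"
proof -
  obtain n0 where n0: "\<And>n. n0 \<le> n \<Longrightarrow> log_card_rate B n < ereal c"
    using Limsup_lessD[OF B_lt] by (auto simp: eventually_sequentially)
  define bound where "bound m = ln C / m + c * M / D + c * M / m" for m :: nat
  have "log_card_rate A m \<le> ereal (bound m)" if m: "max 1 (n0 * D) \<le> m" for m
  proof -
    have "n0 \<le> m div D"
      using m \<open>0 < D\<close> by (simp add: less_eq_div_iff_mult_less_eq)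
    also have "\<dots> \<le> (m div D + 1) * M"
      using mult_le_mono2[OF \<open>1 \<le> M\<close>, of "m div D + 1"] by simp
    finally show ?thesis
      unfolding bound_def using m assms(1-3) n0 transfer by (intro log_card_rate_le_of_transfer) auto
  qed
  then have "limsup (log_card_rate A) \<le> limsup (\<lambda>m. ereal (bound m))"
    by (intro Limsup_mono eventually_sequentiallyI[of "max 1 (n0 * D)"]) blast
  also have "\<dots> = ereal (c * M / D)"
  proof (rule lim_imp_Limsup)
    have "bound \<longlonglongrightarrow> 0 + c * M / D + 0"
      unfolding bound_def by (intro tendsto_intros lim_const_over_n)
    then show "(\<lambda>m. ereal (bound m)) \<longlonglongrightarrow> ereal (c * M / D)"
      by (simp add: tendsto_ereal)
  qed simp
  finally show ?thesis .
qed

lemma ereal_zero_or_infinity_if_contracted: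
  fixes a b :: ereal and s :: real
  assumes "0 \<le> a" "b \<le> a" "0 < s" "s < 1"
    and contract: "\<And>c. 0 \<le> c \<Longrightarrow> b < ereal c \<Longrightarrow> a \<le> ereal (s * c)"
  shows "a = 0 \<or> a = \<infinity>"
proof (rule ccontr)
  assume "\<not> ?thesis"
  then obtain H where H: "a = ereal H" "0 < H"
    using \<open>0 \<le> a\<close> by (cases a) auto
  define c where "c = H * (1 + s) / (2 * s)"
  have "H < c" "s * c < H"
    using H(2) \<open>0 < s\<close> \<open>s < 1\<close> by (simp_all add: c_def field_simps)
  then have "a \<le> ereal (s * c)"
    using contract[of c] H \<open>b \<le> a\<close> by (simp add: order_le_less_trans)
  then show False using H \<open>s * c < H\<close> by simp
qed

section \<open>Iterates of homeomorphisms of compact metric spaces\<close>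

lemma funpow_funpow_apply: "(f ^^ m) ((f ^^ n) x) = (f ^^ (m + n)) x"
  by (simp only: funpow_add o_apply)

lemma homeomorphism_funpow:
  assumes "homeomorphism X X T S"
  shows "homeomorphism X X (T ^^ n) (S ^^ n)"
proof (induction n)
  case 0
  show ?case using homeomorphism_ident by (simp add: id_def)
next
  case (Suc n)
  show ?case
    using homeomorphism_compose[OF Suc assms] by (simp only: funpow.simps(2)[of n T] funpow_Suc_right[of n S])
qed

lemma uniformly_equicontinuous_finite_family:
  assumes "finite I" "\<And>i. i \<in> I \<Longrightarrow> uniformly_continuous_on X (F i)" "0 < e"
  shows "\<exists>d>0. \<forall>i\<in>I. \<forall>a\<in>X. \<forall>b\<in>X. dist a b \<le> d \<longrightarrow> dist (F i a) (F i b) \<le> e"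
proof -
  have "\<exists>d>0. \<forall>a\<in>X. \<forall>b\<in>X. dist a b < d \<longrightarrow> dist (F i a) (F i b) < e" if "i \<in> I" for i
    using assms(2)[OF that] \<open>0 < e\<close> unfolding uniformly_continuous_on_def by (metis dist_commute)
  then obtain d where d: "\<And>i. i \<in> I \<Longrightarrow> 0 < d i \<and>
      (\<forall>a\<in>X. \<forall>b\<in>X. dist a b < d i \<longrightarrow> dist (F i a) (F i b) < e)"
    by metis
  define d0 where "d0 = Min (insert 1 (d ` I))"
  have "0 < d0" "\<And>i. i \<in> I \<Longrightarrow> d0 \<le> d i"
    using d \<open>finite I\<close> by (auto simp: d0_def)
  then show ?thesis
    using d by (intro exI[of _ "d0 / 2"]) force
qed

definition iterates_modulus :: "'a::metric_space set \<Rightarrow> ('a \<Rightarrow> 'a) \<Rightarrow> nat \<Rightarrow> real \<Rightarrow> real \<Rightarrow> bool" where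
  "iterates_modulus X T N \<epsilon> \<delta> \<longleftrightarrow>
     (\<forall>i\<le>N. \<forall>a\<in>X. \<forall>b\<in>X. dist a b \<le> \<delta> \<longrightarrow> dist ((T ^^ i) a) ((T ^^ i) b) \<le> \<epsilon>)"

lemma ex_iterates_modulus:
  assumes "compact X" "homeomorphism X X T S" "0 < e"
  shows "\<exists>d>0. iterates_modulus X T N e d"
proof -
  have "uniformly_continuous_on X (T ^^ i)" for i
    using homeomorphism_cont1[OF homeomorphism_funpow[OF assms(2)]] assms(1)
    by (rule compact_uniformly_continuous)
  then show ?thesis
    using uniformly_equicontinuous_finite_family[of "{..N}" X "\<lambda>i. T ^^ i" e] assms(3)
    by (auto simp: iterates_modulus_def)
qed

lemma clopen_uniformly_isolated:
  assumes "compact X" "openin (top_of_set X) U" "closedin (top_of_set X) U"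
  shows "\<exists>d>0. \<forall>x\<in>X. \<forall>y\<in>X. dist x y < d \<longrightarrow> (x \<in> U \<longleftrightarrow> y \<in> U)"
proof -
  have "closedin (top_of_set X) (X - U)"
    using assms(2) by (simp add: closedin_diff)
  then have "continuous_on (U \<union> (X - U)) (\<lambda>x. if x \<in> U then 1 else (0::real))"
    using assms(3) closedin_subset[OF assms(3)]
    by (intro continuous_on_cases_local) (auto simp: Un_absorb1)
  then have "uniformly_continuous_on X (\<lambda>x. if x \<in> U then 1 else (0::real))"
    using closedin_subset[OF assms(3)] \<open>compact X\<close>
    by (intro compact_uniformly_continuous) (simp_all add: Un_absorb1)
  then obtain d where "0 < d"
      "\<forall>x\<in>X. \<forall>y\<in>X. dist y x < d \<longrightarrow> dist (if y \<in> U then 1 else 0) (if x \<in> U then 1 else (0::real)) < 1"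
    unfolding uniformly_continuous_on_def by (meson zero_less_one)
  then show ?thesis
    by (intro exI[of _ d]) (auto simp: dist_commute split: if_splits)
qed

lemma card_le_card_mult_fiber:
  assumes "finite E" "finite I" "I \<noteq> {}" "g ` E \<subseteq> I"
  shows "\<exists>c\<in>I. card E \<le> card I * card {x\<in>E. g x = c}"
proof -
  define k where "k c = card {x\<in>E. g x = c}" for c
  obtain c where "c \<in> I" "k c = Max (k ` I)"
    using Max_in[of "k ` I"] assms(2,3) by fastforce
  then have c: "c \<in> I" "\<And>c'. c' \<in> I \<Longrightarrow> card {x\<in>E. g x = c'} \<le> card {x\<in>E. g x = c}"
    using assms(2) by (auto simp: k_def[symmetric])
  have "E = (\<Union>c\<in>I. {x\<in>E. g x = c})"
    using assms(4) by blast
  then have "card E \<le> (\<Sum>c'\<in>I. card {x\<in>E. g x = c'})"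
    by (metis card_UN_le assms(2))
  also have "\<dots> \<le> card I * card {x\<in>E. g x = c}"
    using sum_bounded_above[of I _ "card {x\<in>E. g x = c}"] c(2) by simp
  finally show ?thesis using c(1) by blast
qed

lemma separated_set_image:
  assumes E: "separated_set U f n \<epsilon> E" and "h ` U \<subseteq> X"
    and conj: "\<And>x k. x \<in> U \<Longrightarrow> h ((f ^^ k) x) = (T ^^ k) (h x) \<and> (f ^^ k) x \<in> U"
    and expansive: "\<And>a b. a \<in> U \<Longrightarrow> b \<in> U \<Longrightarrow> \<epsilon> < dist a b \<Longrightarrow> \<delta> < dist (h a) (h b)"
  shows "separated_set X T n \<delta> (h ` E)"
  unfolding separated_set_def
proof (intro conjI ballI impI)
  have "E \<subseteq> U" using E by (simp add: separated_set_def)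
  then show "h ` E \<subseteq> X" using \<open>h ` U \<subseteq> X\<close> by blast
  fix x y assume "x \<in> h ` E" "y \<in> h ` E" "x \<noteq> y"
  then obtain a b where ab: "a \<in> E" "b \<in> E" "a \<noteq> b" "x = h a" "y = h b" by blast
  then obtain k where "k < n" "\<epsilon> < dist ((f ^^ k) a) ((f ^^ k) b)"
    using E unfolding separated_set_def by blast
  moreover have "a \<in> U" "b \<in> U" using ab \<open>E \<subseteq> U\<close> by auto
  ultimately have "\<delta> < dist ((T ^^ k) x) ((T ^^ k) y)"
    using expansive[of "(f ^^ k) a" "(f ^^ k) b"] conj[of a k] conj[of b k] ab by simp
  then show "\<exists>k<n. \<delta> < dist ((T ^^ k) x) ((T ^^ k) y)" using \<open>k < n\<close> by blast
qed

lemma top_entropy_le_of_conjugacy: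
  assumes hg: "homeomorphism U X h g" and "compact X"
    and conj: "\<And>x. x \<in> U \<Longrightarrow> h (f x) = T (h x)" and f_U: "f ` U \<subseteq> U"
  shows "top_entropy U f \<le> top_entropy X T"
  unfolding top_entropy_eq_log_card_rate
proof (rule SUP_least)
  fix \<epsilon> :: real assume "\<epsilon> \<in> {0<..}"
  have "uniformly_continuous_on X g"
    using hg \<open>compact X\<close> compact_uniformly_continuous homeomorphism_cont2 by blast
  then obtain \<delta> where "0 < \<delta>" and \<delta>: "\<forall>q\<in>X. \<forall>p\<in>X. dist p q < \<delta> \<longrightarrow> dist (g p) (g q) < \<epsilon>"
    using \<open>\<epsilon> \<in> {0<..}\<close> unfolding uniformly_continuous_on_def by auto
  have h_X: "h ` U \<subseteq> X" and g_h: "\<And>x. x \<in> U \<Longrightarrow> g (h x) = x"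
    using hg by (auto simp: homeomorphism_def)
  have h_funpow: "h ((f ^^ k) x) = (T ^^ k) (h x) \<and> (f ^^ k) x \<in> U" if "x \<in> U" for x k
    using that conj f_U by (induction k) auto
  have h_expansive: "\<delta> / 2 < dist (h a) (h b)" if "a \<in> U" "b \<in> U" "\<epsilon> < dist a b" for a b
    using \<delta> that h_X g_h \<open>0 < \<delta>\<close> by force
  have "log_card_rate (separated_sets U f \<epsilon>) n \<le> log_card_rate (separated_sets X T (\<delta> / 2)) n" for n
    unfolding log_card_rate_def
  proof (rule SUP_least)
    fix E assume E: "E \<in> separated_sets U f \<epsilon> n"
    then have "E \<subseteq> U" by (simp add: separated_sets_def separated_set_def)
    then have "card (h ` E) = card E"
      using g_h by (metis card_image inj_on_def subsetD)
    moreover have "h ` E \<in> separated_sets X T (\<delta> / 2) n"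
      using E separated_set_image[where \<epsilon>=\<epsilon>, OF _ h_X h_funpow h_expansive]
      by (simp add: separated_sets_def)
    ultimately show "ereal (ln (card E) / n) \<le> (SUP F\<in>separated_sets X T (\<delta> / 2) n. ereal (ln (card F) / n))"
      by (simp add: SUP_upper2)
  qed
  then have "limsup (log_card_rate (separated_sets U f \<epsilon>)) \<le> limsup (log_card_rate (separated_sets X T (\<delta> / 2)))"
    by (intro Limsup_mono always_eventually) simp
  also have "\<dots> \<le> (SUP \<epsilon>\<in>{0<..}. limsup (log_card_rate (separated_sets X T \<epsilon>)))"
    using \<open>0 < \<delta>\<close> by (intro SUP_upper) simp
  finally show "limsup (log_card_rate (separated_sets U f \<epsilon>)) \<le> \<dots>" .
qed

locale invertible_system =
  fixes X :: "'a::metric_space set" and T S :: "'a \<Rightarrow> 'a"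
  assumes compact: "compact X" and homeo: "homeomorphism X X T S"
begin

lemma homeo_funpow: "homeomorphism X X (T ^^ n) (S ^^ n)"
  using homeomorphism_funpow[OF homeo] .

lemma funpow_T_in: "x \<in> X \<Longrightarrow> (T ^^ n) x \<in> X"
  using homeomorphism_image1[OF homeo_funpow] by blast

lemma funpow_S_in: "x \<in> X \<Longrightarrow> (S ^^ n) x \<in> X"
  using homeomorphism_image2[OF homeo_funpow] by blast

lemma funpow_S_funpow_T: "x \<in> X \<Longrightarrow> (S ^^ n) ((T ^^ (n + k)) x) = (T ^^ k) x"
  by (simp add: funpow_add homeomorphism_apply1[OF homeo_funpow] funpow_T_in)

lemma inj_on_funpow_T: "inj_on (T ^^ n) X"
  by (metis homeomorphism_apply1[OF homeo_funpow] inj_on_inverseI)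

lemma orbit_eq:
  assumes "x \<in> X"
  shows "orbit X T x = range (\<lambda>n. (T ^^ n) x) \<union> range (\<lambda>n. (S ^^ n) x)"
proof -
  have inv: "inv_into X T y = S y" if "y \<in> X" for y
    using homeo that inj_on_funpow_T[of 1]
    by (intro inv_into_f_eq) (auto simp: homeomorphism_def)
  have "(inv_into X T ^^ n) x = (S ^^ n) x" for n
    using assms by (induction n) (simp_all add: inv funpow_S_in)
  then show ?thesis
    unfolding orbit_def by auto
qed

lemma orbit_meets_open:
  assumes minimal: "\<forall>x\<in>X. closure (orbit X T x) = X"
    and "openin (top_of_set X) V" "V \<noteq> {}" "x \<in> X"
  shows "\<exists>n. (T ^^ n) x \<in> V \<or> (S ^^ n) x \<in> V"
proof -
  obtain W where "open W" "V = W \<inter> X"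
    using \<open>openin (top_of_set X) V\<close> by (auto simp: openin_open)
  moreover obtain p where "p \<in> V" using \<open>V \<noteq> {}\<close> by blast
  ultimately have "W \<inter> orbit X T x \<noteq> {}"
    using minimal \<open>x \<in> X\<close> open_Int_closure_eq_empty[of W "orbit X T x"] by auto
  then show ?thesis
    using \<open>V = W \<inter> X\<close> \<open>x \<in> X\<close> funpow_T_in funpow_S_in by (auto simp: orbit_eq)
qed

lemma bounded_two_sided_hitting_time:
  assumes "openin (top_of_set X) V" and hits: "\<And>x. x \<in> X \<Longrightarrow> \<exists>n. (T ^^ n) x \<in> V \<or> (S ^^ n) x \<in> V"
  shows "\<exists>K. \<forall>x\<in>X. \<exists>n\<le>K. (T ^^ n) x \<in> V \<or> (S ^^ n) x \<in> V"
proof -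
  define G where "G n = X \<inter> (T ^^ n) -` V \<union> X \<inter> (S ^^ n) -` V" for n
  have "openin (top_of_set X) (G n)" for n
    unfolding G_def using assms(1) homeomorphism_cont1[OF homeo_funpow] homeomorphism_cont2[OF homeo_funpow]
    by (intro openin_Un continuous_openin_preimage) (auto simp: funpow_T_in funpow_S_in)
  moreover have "X \<subseteq> \<Union> (range G)"
    using hits by (auto simp: G_def)
  ultimately obtain D where "D \<subseteq> range G" "finite D" "X \<subseteq> \<Union> D"
    using compact_eq_openin_cover[THEN iffD1, OF compact, rule_format, of "range G"] by blast
  then obtain C where "finite C" "X \<subseteq> \<Union> (G ` C)"
    by (metis finite_subset_image)
  obtain K where K: "\<forall>n\<in>C. n \<le> K"
    using \<open>finite C\<close> finite_nat_set_iff_bounded_le by blast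
  show ?thesis
  proof (rule exI[of _ K], intro ballI)
    fix x assume "x \<in> X"
    then obtain n where "n \<in> C" "x \<in> G n" using \<open>X \<subseteq> \<Union> (G ` C)\<close> by blast
    then show "\<exists>n\<le>K. (T ^^ n) x \<in> V \<or> (S ^^ n) x \<in> V" using K by (auto simp: G_def)
  qed
qed

lemma bounded_hitting_time:
  assumes "\<forall>x\<in>X. closure (orbit X T x) = X" "openin (top_of_set X) V" "V \<noteq> {}"
  shows "\<exists>K. \<forall>x\<in>X. \<exists>j\<in>{1..K}. (T ^^ j) x \<in> V"
proof -
  obtain K where K: "\<forall>x\<in>X. \<exists>n\<le>K. (T ^^ n) x \<in> V \<or> (S ^^ n) x \<in> V"
    using bounded_two_sided_hitting_time[OF assms(2) orbit_meets_open[OF assms]] by blast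
  have "\<exists>j\<in>{1..2 * K + 1}. (T ^^ j) x \<in> V" if "x \<in> X" for x
  proof -
    obtain n where "n \<le> K" and n: "(T ^^ n) ((T ^^ (K + 1)) x) \<in> V \<or> (S ^^ n) ((T ^^ (K + 1)) x) \<in> V"
      using K funpow_T_in \<open>x \<in> X\<close> by blast
    have "(T ^^ n) ((T ^^ (K + 1)) x) = (T ^^ (n + (K + 1))) x"
      by (simp only: funpow_add o_apply)
    moreover have "(S ^^ n) ((T ^^ (K + 1)) x) = (T ^^ (K + 1 - n)) x"
      using funpow_S_funpow_T[OF \<open>x \<in> X\<close>, of n "K + 1 - n"] \<open>n \<le> K\<close> by simp
    ultimately consider "(T ^^ (n + (K + 1))) x \<in> V" | "(T ^^ (K + 1 - n)) x \<in> V"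
      using n by fastforce
    then show ?thesis
    proof cases
      case 1
      then show ?thesis using \<open>n \<le> K\<close> by (intro bexI[of _ "n + (K + 1)"]) auto
    next
      case 2
      then show ?thesis using \<open>n \<le> K\<close> by (intro bexI[of _ "K + 1 - n"]) auto
    qed
  qed
  then show ?thesis by blast
qed

lemma separated_set_funpow_image:
  assumes E: "separated_set X T m \<epsilon> E" and "c \<le> N"
    and \<delta>\<^sub>1: "iterates_modulus X S N \<epsilon> \<delta>\<^sub>1"
    and "\<delta> \<le> \<delta>\<^sub>1" "\<delta> \<le> \<epsilon>"
  shows "separated_set X T m \<delta> ((T ^^ c) ` E)"
  unfolding separated_set_def
proof (intro conjI ballI impI)
  have "E \<subseteq> X" using E by (simp add: separated_set_def)
  then show "(T ^^ c) ` E \<subseteq> X" using funpow_T_in by blast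
  fix a b assume "a \<in> (T ^^ c) ` E" "b \<in> (T ^^ c) ` E" "a \<noteq> b"
  then obtain x y where xy: "x \<in> E" "y \<in> E" "x \<noteq> y" "a = (T ^^ c) x" "b = (T ^^ c) y"
    by blast
  then obtain k where "k < m" and k: "\<epsilon> < dist ((T ^^ k) x) ((T ^^ k) y)"
    using E unfolding separated_set_def by blast
  show "\<exists>k<m. \<delta> < dist ((T ^^ k) a) ((T ^^ k) b)"
  proof (cases "c \<le> k")
    case True
    then have "(T ^^ (k - c)) a = (T ^^ k) x" "(T ^^ (k - c)) b = (T ^^ k) y"
      using xy by (simp_all add: funpow_funpow_apply)
    then show ?thesis
      using k \<open>k < m\<close> \<open>\<delta> \<le> \<epsilon>\<close> by (intro exI[of _ "k - c"]) auto
  next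
    case False
    then have undo: "(S ^^ (c - k)) a = (T ^^ k) x" "(S ^^ (c - k)) b = (T ^^ k) y"
      using xy \<open>E \<subseteq> X\<close> funpow_S_funpow_T[of _ "c - k" k] by auto
    have "\<delta>\<^sub>1 < dist a b"
    proof (rule ccontr)
      assume "\<not> \<delta>\<^sub>1 < dist a b"
      moreover have "a \<in> X" "b \<in> X" "c - k \<le> N"
        using xy \<open>E \<subseteq> X\<close> funpow_T_in \<open>c \<le> N\<close> by auto
      ultimately have "dist ((S ^^ (c - k)) a) ((S ^^ (c - k)) b) \<le> \<epsilon>"
        using \<delta>\<^sub>1 by (simp add: iterates_modulus_def)
      then show False using k undo by simp
    qed
    then show ?thesis
      using \<open>k < m\<close> \<open>\<delta> \<le> \<delta>\<^sub>1\<close> by (intro exI[of _ 0]) auto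
  qed
qed

end

section \<open>First returns to a clopen set\<close>

locale first_return_system = invertible_system +
  fixes U :: "'a::metric_space set" and N M :: nat and d :: real
  assumes U_subset: "U \<subseteq> X"
    and return_bound: "\<forall>x\<in>X. \<exists>j\<in>{1..N}. (T ^^ j) x \<in> U"
    and exit_bound: "1 \<le> M" "\<forall>x\<in>X. \<exists>j\<le>M. (T ^^ j) x \<notin> U"
    and U_isolated: "0 < d" "\<forall>x\<in>X. \<forall>y\<in>X. dist x y < d \<longrightarrow> (x \<in> U \<longleftrightarrow> y \<in> U)"
begin

abbreviation r where "r \<equiv> return_time U T"
abbreviation f where "f \<equiv> induced_map U T"

definition nth_return_time :: "nat \<Rightarrow> 'a \<Rightarrow> nat" where
  "nth_return_time j x = (\<Sum>i<j. r ((f ^^ i) x))"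

lemma nth_return_time_0 [simp]: "nth_return_time 0 x = 0"
  by (simp add: nth_return_time_def)

lemma nth_return_time_Suc [simp]: "nth_return_time (Suc j) x = nth_return_time j x + r ((f ^^ j) x)"
  by (simp add: nth_return_time_def)

lemma return_time_le: "0 < i \<Longrightarrow> (T ^^ i) x \<in> U \<Longrightarrow> r x \<le> i"
  unfolding return_time_def by (intro Least_le) simp

lemma return_time_bounds:
  assumes "x \<in> X"
  shows "1 \<le> r x \<and> r x \<le> N \<and> (T ^^ r x) x \<in> U"
proof -
  obtain j where "j \<in> {1..N}" and j_U: "(T ^^ j) x \<in> U"
    using return_bound assms by blast
  then have "1 \<le> j" "j \<le> N"
    by auto
  then have "0 < r x \<and> (T ^^ r x) x \<in> U"
    unfolding return_time_def using LeastI[of "\<lambda>n. 0 < n \<and> (T ^^ n) x \<in> U" j] \<open>1 \<le> j\<close> j_U by simp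
  moreover have "r x \<le> j"
    using return_time_le \<open>1 \<le> j\<close> j_U by simp
  ultimately show ?thesis using \<open>j \<le> N\<close> by simp
qed

lemma induced_map_in: "x \<in> X \<Longrightarrow> f x \<in> U"
  using return_time_bounds by (simp add: induced_map_def)

lemma funpow_induced_map_in: "x \<in> U \<Longrightarrow> (f ^^ j) x \<in> U"
  using induced_map_in U_subset by (induction j) auto

lemma funpow_induced_map: "x \<in> U \<Longrightarrow> (f ^^ j) x = (T ^^ nth_return_time j x) x"
proof (induction j)
  case (Suc j)
  have "(f ^^ Suc j) x = (T ^^ r ((f ^^ j) x)) ((f ^^ j) x)"
    by (simp add: induced_map_def)
  also have "\<dots> = (T ^^ r ((f ^^ j) x)) ((T ^^ nth_return_time j x) x)"
    using Suc by simp
  also have "\<dots> = (T ^^ nth_return_time (Suc j) x) x"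
    by (simp only: nth_return_time_Suc add.commute[of "nth_return_time j x"] funpow_add o_apply)
  finally show ?case .
qed simp

lemma nth_return_time_add: "x \<in> U \<Longrightarrow> nth_return_time j x + k \<le> nth_return_time (j + k) x"
proof (induction k)
  case (Suc k)
  have "(f ^^ (j + k)) x \<in> X"
    using funpow_induced_map_in[OF Suc.prems] U_subset by blast
  then have "1 \<le> r ((f ^^ (j + k)) x)"
    using return_time_bounds by blast
  then show ?case
    using Suc by simp
qed simp

lemma nth_return_time_gap:
  assumes "x \<in> U"
  shows "nth_return_time j x + M < nth_return_time (j + M) x"
proof (rule ccontr)
  assume "\<not> ?thesis"
  then have total: "nth_return_time (j + M) x = nth_return_time j x + M"
    using nth_return_time_add[OF assms, of j M] by simp
  have "(T ^^ nth_return_time j x) x \<in> X"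
    using assms U_subset funpow_T_in by blast
  then have "\<exists>t\<le>M. (T ^^ t) ((T ^^ nth_return_time j x) x) \<notin> U"
    using exit_bound(2) by (rule bspec[rotated])
  then obtain t where "t \<le> M" and t_out: "(T ^^ t) ((T ^^ nth_return_time j x) x) \<notin> U"
    by blast
  have "j + t + (M - t) = j + M"
    using \<open>t \<le> M\<close> by simp
  then have "nth_return_time (j + t) x + (M - t) \<le> nth_return_time (j + M) x"
    using nth_return_time_add[OF assms, of "j + t" "M - t"] by (simp only:)
  then have "nth_return_time (j + t) x = t + nth_return_time j x"
    using nth_return_time_add[OF assms, of j t] total \<open>t \<le> M\<close> by linarith
  then have "(T ^^ t) ((T ^^ nth_return_time j x) x) = (f ^^ (j + t)) x"
    using funpow_induced_map[OF assms, of "j + t"] by (simp only: funpow_add o_apply)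
  then show False
    using t_out funpow_induced_map_in[OF assms] by simp
qed

lemma nth_return_time_lower:
  assumes "x \<in> U"
  shows "j + j div M \<le> nth_return_time j x"
proof -
  have blocks: "q * (M + 1) \<le> nth_return_time (q * M) x" for q
  proof (induction q)
    case (Suc q)
    have step: "Suc q * M = q * M + M" by simp
    have "Suc q * (M + 1) = q * (M + 1) + M + 1" by simp
    then show ?case
      unfolding step using Suc nth_return_time_gap[OF \<open>x \<in> U\<close>, of "q * M"] by linarith
  qed simp
  define q where "q = j div M"
  define \<rho> where "\<rho> = j mod M"
  have "j = q * M + \<rho>"
    by (simp add: q_def \<rho>_def)
  then have "nth_return_time (q * M) x + \<rho> \<le> nth_return_time j x"
    using nth_return_time_add[OF \<open>x \<in> U\<close>] by simp
  moreover have "q * M + q \<le> nth_return_time (q * M) x"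
    using blocks[of q] by (simp add: distrib_left)
  ultimately show ?thesis
    using \<open>j = q * M + \<rho>\<close> unfolding q_def[symmetric] by linarith
qed

lemma nth_return_time_eq_if_same_visits:
  assumes "u \<in> U" "v \<in> U" and visits: "\<forall>i<k. (T ^^ i) u \<in> U \<longleftrightarrow> (T ^^ i) v \<in> U"
  shows "nth_return_time j u < k \<Longrightarrow> nth_return_time j u = nth_return_time j v"
proof (induction j)
  case (Suc j)
  define s where "s = nth_return_time j u"
  define a where "a = (f ^^ j) u"
  define b where "b = (f ^^ j) v"
  have "s + r a < k"
    using Suc.prems by (simp add: s_def a_def)
  then have "nth_return_time j v = s"
    using Suc.IH by (simp add: s_def)
  then have a_eq: "a = (T ^^ s) u" and b_eq: "b = (T ^^ s) v"
    using funpow_induced_map assms(1,2) by (simp_all add: s_def a_def b_def)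
  have "a \<in> X" "b \<in> X"
    using funpow_induced_map_in assms(1,2) U_subset by (auto simp: a_def b_def)
  then have ra: "1 \<le> r a" "(T ^^ r a) a \<in> U" and rb: "1 \<le> r b" "(T ^^ r b) b \<in> U"
    using return_time_bounds by blast+
  have "(T ^^ r a) b \<in> U"
    using visits \<open>s + r a < k\<close> ra(2) by (simp add: a_eq b_eq funpow_funpow_apply)
  then have "r b \<le> r a"
    using ra(1) return_time_le by simp
  then have "(T ^^ r b) a \<in> U"
    using visits \<open>s + r a < k\<close> rb(2) by (simp add: a_eq b_eq funpow_funpow_apply)
  then have "r a \<le> r b"
    using rb(1) return_time_le by simp
  then show ?case
    using \<open>r b \<le> r a\<close> \<open>nth_return_time j v = s\<close> by (simp add: s_def a_def b_def)
qed simp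

lemma le_nth_return_time: "x \<in> U \<Longrightarrow> j \<le> nth_return_time j x"
  using nth_return_time_add[of x 0 j] by simp

lemma last_common_return:
  assumes "u \<in> U" "v \<in> U" and visits: "\<forall>i<k. (T ^^ i) u \<in> U \<longleftrightarrow> (T ^^ i) v \<in> U"
  shows "\<exists>j. nth_return_time j u = nth_return_time j v \<and> nth_return_time j u \<le> k
           \<and> k \<le> nth_return_time j u + N"
proof (cases "k = 0")
  case True
  then show ?thesis by (intro exI[of _ 0]) simp
next
  case False
  define J where "J = {j. nth_return_time j u < k}"
  have "0 \<in> J" using False by (simp add: J_def)
  have "J \<subseteq> {..<k}"
    using le_nth_return_time[OF \<open>u \<in> U\<close>] by (auto simp: J_def intro: le_less_trans)
  then have "finite J" by (rule finite_subset) simp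
  define j where "j = Max J"
  have "j \<in> J" unfolding j_def using \<open>finite J\<close> \<open>0 \<in> J\<close> by (intro Max_in) auto
  have "Suc j \<notin> J"
    using Max_ge[OF \<open>finite J\<close>, of "Suc j"] by (auto simp: j_def)
  have "(f ^^ j) u \<in> X"
    using funpow_induced_map_in[OF \<open>u \<in> U\<close>] U_subset by blast
  then have "nth_return_time (Suc j) u \<le> nth_return_time j u + N"
    using return_time_bounds by simp
  moreover have "nth_return_time j u = nth_return_time j v"
    using \<open>j \<in> J\<close> nth_return_time_eq_if_same_visits[OF assms] by (simp add: J_def)
  ultimately show ?thesis
    using \<open>j \<in> J\<close> \<open>Suc j \<notin> J\<close> by (intro exI[of _ j]) (simp add: J_def)
qed

lemma separated_at_common_return:
  assumes "u \<in> U" "v \<in> U" and visits: "\<forall>i<k. (T ^^ i) u \<in> U \<longleftrightarrow> (T ^^ i) v \<in> U"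
    and apart: "\<delta> < dist ((T ^^ k) u) ((T ^^ k) v)" and \<delta>': "iterates_modulus X T N \<delta> \<delta>'"
  shows "\<exists>j. nth_return_time j u \<le> k \<and> \<delta>' < dist ((f ^^ j) u) ((f ^^ j) v)"
proof -
  obtain j where j: "nth_return_time j u = nth_return_time j v" "nth_return_time j u \<le> k"
      "k \<le> nth_return_time j u + N"
    using last_common_return[OF assms(1-3)] by blast
  define s where "s = nth_return_time j u"
  have at_k: "(T ^^ (k - s)) ((f ^^ j) u) = (T ^^ k) u" "(T ^^ (k - s)) ((f ^^ j) v) = (T ^^ k) v"
    using funpow_induced_map[OF \<open>u \<in> U\<close>] funpow_induced_map[OF \<open>v \<in> U\<close>] j(1,2)
    by (simp_all add: s_def funpow_funpow_apply)
  have "\<delta>' < dist ((f ^^ j) u) ((f ^^ j) v)"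
  proof (rule ccontr)
    assume "\<not> \<delta>' < dist ((f ^^ j) u) ((f ^^ j) v)"
    moreover have "(f ^^ j) u \<in> X" "(f ^^ j) v \<in> X" "k - s \<le> N"
      using funpow_induced_map_in \<open>u \<in> U\<close> \<open>v \<in> U\<close> U_subset j(3) by (auto simp: s_def)
    ultimately have "dist ((T ^^ k) u) ((T ^^ k) v) \<le> \<delta>"
      using \<delta>' at_k by (fastforce simp: iterates_modulus_def)
    then show False using apart by simp
  qed
  then show ?thesis using j(2) by blast
qed

lemma separated_set_induced_map:
  assumes "F \<subseteq> U" and F_sep: "separated_set X T m \<delta> F" and "\<delta> < d"
    and \<delta>': "iterates_modulus X T N \<delta> \<delta>'"
    and "m \<le> q * (M + 1)"
  shows "separated_set U f (q * M) \<delta>' F"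
  unfolding separated_set_def
proof (intro conjI ballI impI)
  show "F \<subseteq> U" by fact
  fix u v assume "u \<in> F" "v \<in> F" "u \<noteq> v"
  then have "u \<in> U" "v \<in> U" using \<open>F \<subseteq> U\<close> by auto
  then have "u \<in> X" "v \<in> X" using U_subset by auto
  \<comment> \<open>Before the first time k at which u and v are \<delta>-apart they are d-close, so they visit U together.\<close>
  define P where "P k \<longleftrightarrow> k < m \<and> \<delta> < dist ((T ^^ k) u) ((T ^^ k) v)" for k
  have "\<exists>k. P k"
    using F_sep \<open>u \<in> F\<close> \<open>v \<in> F\<close> \<open>u \<noteq> v\<close> unfolding separated_set_def P_def by auto
  define k where "k = (LEAST k. P k)"
  have k: "k < m" "\<delta> < dist ((T ^^ k) u) ((T ^^ k) v)"
    using LeastI_ex[OF \<open>\<exists>k. P k\<close>] by (simp_all add: k_def P_def)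
  have "(T ^^ i) u \<in> U \<longleftrightarrow> (T ^^ i) v \<in> U" if "i < k" for i
  proof -
    have "\<not> P i" using not_less_Least[of i P] that by (simp add: k_def)
    then have "dist ((T ^^ i) u) ((T ^^ i) v) < d"
      using that k(1) \<open>\<delta> < d\<close> by (simp add: P_def)
    then show ?thesis
      using U_isolated(2) funpow_T_in \<open>u \<in> X\<close> \<open>v \<in> X\<close> by blast
  qed
  then obtain j where "nth_return_time j u \<le> k" and "\<delta>' < dist ((f ^^ j) u) ((f ^^ j) v)"
    using separated_at_common_return[OF \<open>u \<in> U\<close> \<open>v \<in> U\<close> _ k(2) \<delta>'] by blast
  define s where "s = nth_return_time j u"
  have "s \<le> k" using \<open>nth_return_time j u \<le> k\<close> by (simp add: s_def)
  have "j < q * M"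
  proof (rule ccontr)
    assume "\<not> j < q * M"
    then have "q \<le> j div M"
      using exit_bound(1) div_le_mono[of "q * M" j M] by simp
    then have "q * M + q \<le> s"
      using nth_return_time_lower[OF \<open>u \<in> U\<close>, of j] \<open>\<not> j < q * M\<close> by (simp add: s_def)
    then show False
      using \<open>m \<le> q * (M + 1)\<close> k(1) \<open>s \<le> k\<close> by (simp add: algebra_simps)
  qed
  then show "\<exists>k<q * M. \<delta>' < dist ((f ^^ k) u) ((f ^^ k) v)"
    using \<open>\<delta>' < dist ((f ^^ j) u) ((f ^^ j) v)\<close> by blast
qed

lemma separated_set_into_U:
  assumes E: "E \<in> separated_sets X T \<epsilon> m"
    and \<delta>\<^sub>1: "iterates_modulus X S N \<epsilon> \<delta>\<^sub>1"
    and "\<delta> \<le> \<delta>\<^sub>1" "\<delta> \<le> \<epsilon>"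
  shows "\<exists>F\<in>separated_sets X T \<delta> m. F \<subseteq> U \<and> card E \<le> N * card F"
proof -
  have "finite E" "E \<noteq> {}" and E_sep: "separated_set X T m \<epsilon> E"
    using E by (simp_all add: separated_sets_def)
  then have "E \<subseteq> X" by (simp add: separated_set_def)
  then have "r ` E \<subseteq> {1..N}"
    using return_time_bounds by auto
  moreover have "{1..N} \<noteq> {}"
    using \<open>r ` E \<subseteq> {1..N}\<close> \<open>E \<noteq> {}\<close> by blast
  ultimately obtain c where "c \<in> {1..N}" and c: "card E \<le> card {1..N} * card {x\<in>E. r x = c}"
    using card_le_card_mult_fiber[OF \<open>finite E\<close> finite_atLeastAtMost] by blast
  define F where "F = (T ^^ c) ` {x\<in>E. r x = c}"
  have "F \<subseteq> U"
    using return_time_bounds \<open>E \<subseteq> X\<close> by (auto simp: F_def)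
  have "card F = card {x\<in>E. r x = c}"
    unfolding F_def using inj_on_funpow_T \<open>E \<subseteq> X\<close> by (intro card_image) (auto intro: inj_on_subset)
  then have "card E \<le> N * card F"
    using c by simp
  moreover have "separated_set X T m \<delta> F"
    unfolding F_def using \<open>c \<in> {1..N}\<close> \<delta>\<^sub>1 assms(3,4)
    by (intro separated_set_funpow_image[where \<epsilon>=\<epsilon>] separated_set_subset[OF E_sep]) auto
  moreover have "F \<noteq> {}"
    using \<open>card E \<le> N * card F\<close> \<open>finite E\<close> \<open>E \<noteq> {}\<close> by (auto simp: card_gt_0_iff[symmetric])
  ultimately show ?thesis
    using \<open>F \<subseteq> U\<close> \<open>finite E\<close> by (intro bexI[of _ F]) (auto simp: separated_sets_def F_def)
qed

lemma limsup_separated_rate_le: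
  assumes "0 < \<epsilon>" "0 \<le> c" "top_entropy U f < ereal c"
  shows "limsup (log_card_rate (separated_sets X T \<epsilon>)) \<le> ereal (c * M / real (M + 1))"
proof -
  define \<epsilon>\<^sub>0 where "\<epsilon>\<^sub>0 = min \<epsilon> (d / 2)"
  have "0 < \<epsilon>\<^sub>0" "\<epsilon>\<^sub>0 \<le> \<epsilon>" "\<epsilon>\<^sub>0 < d"
    using assms(1) U_isolated(1) by (auto simp: \<epsilon>\<^sub>0_def)
  obtain \<delta>\<^sub>1 where "0 < \<delta>\<^sub>1"
    and \<delta>\<^sub>1: "iterates_modulus X S N \<epsilon>\<^sub>0 \<delta>\<^sub>1"
    using ex_iterates_modulus[OF compact homeomorphism_symD[OF homeo] \<open>0 < \<epsilon>\<^sub>0\<close>]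
    by blast
  define \<delta> where "\<delta> = min \<delta>\<^sub>1 \<epsilon>\<^sub>0"
  have "0 < \<delta>" "\<delta> \<le> \<delta>\<^sub>1" "\<delta> \<le> \<epsilon>\<^sub>0" "\<delta> < d"
    using \<open>0 < \<delta>\<^sub>1\<close> \<open>0 < \<epsilon>\<^sub>0\<close> \<open>\<epsilon>\<^sub>0 < d\<close> by (auto simp: \<delta>_def)
  obtain \<delta>' where "0 < \<delta>'"
    and \<delta>': "iterates_modulus X T N \<delta> \<delta>'"
    using ex_iterates_modulus[OF compact homeo \<open>0 < \<delta>\<close>] by blast
  have "limsup (log_card_rate (separated_sets U f \<delta>')) \<le> top_entropy U f"
    unfolding top_entropy_eq_log_card_rate using \<open>0 < \<delta>'\<close> by (intro SUP_upper) simp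
  then have induced_rate: "limsup (log_card_rate (separated_sets U f \<delta>')) < ereal c"
    using assms(3) by (rule le_less_trans)
  show ?thesis
  proof (rule limsup_log_card_rate_le[OF exit_bound(1) _ \<open>0 \<le> c\<close> induced_rate])
    fix m E assume "E \<in> separated_sets X T \<epsilon> m"
    then have "E \<in> separated_sets X T \<epsilon>\<^sub>0 m" and "0 < card E"
      using separated_set_mono[OF _ \<open>\<epsilon>\<^sub>0 \<le> \<epsilon>\<close>] by (auto simp: separated_sets_def card_gt_0_iff)
    then obtain F where F: "F \<in> separated_sets X T \<delta> m" "F \<subseteq> U" "card E \<le> N * card F"
      using separated_set_into_U[OF _ \<delta>\<^sub>1 \<open>\<delta> \<le> \<delta>\<^sub>1\<close> \<open>\<delta> \<le> \<epsilon>\<^sub>0\<close>] by blast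
    have "m div (M + 1) * (M + 1) + m mod (M + 1) = m" "m mod (M + 1) < M + 1"
      "(m div (M + 1) + 1) * (M + 1) = m div (M + 1) * (M + 1) + (M + 1)"
      by (simp_all only: div_mult_mod_eq mod_less_divisor zero_less_Suc add_mult_distrib mult_1)
    then have "m \<le> (m div (M + 1) + 1) * (M + 1)"
      by linarith
    then have "separated_set U f ((m div (M + 1) + 1) * M) \<delta>' F"
      using F \<open>\<delta> < d\<close> \<delta>' by (intro separated_set_induced_map) (auto simp: separated_sets_def)
    then show "\<exists>F\<in>separated_sets U f \<delta>' ((m div (M + 1) + 1) * M). 0 < card E \<and> card E \<le> N * card F"
      using F \<open>0 < card E\<close> by (intro bexI[of _ F]) (auto simp: separated_sets_def)
  qed simp
qed

lemma top_entropy_le_induced: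
  assumes "0 \<le> c" "top_entropy U f < ereal c"
  shows "top_entropy X T \<le> ereal (real M / real (M + 1) * c)"
  unfolding top_entropy_eq_log_card_rate
  using limsup_separated_rate_le[OF _ assms] by (intro SUP_least) (simp add: field_simps)

lemma top_entropy_zero_or_infinity_if_conjugate:
  assumes "top_conjugate U f X T" "X \<noteq> {}"
  shows "top_entropy X T = 0 \<or> top_entropy X T = \<infinity>"
proof -
  obtain h g where "homeomorphism U X h g" "\<forall>x\<in>U. h (f x) = T (h x)"
    using assms(1) unfolding top_conjugate_def by blast
  moreover have "f ` U \<subseteq> U"
    using induced_map_in U_subset by blast
  ultimately have "top_entropy U f \<le> top_entropy X T"
    using top_entropy_le_of_conjugacy compact by blast
  then show ?thesis
    using exit_bound(1) top_entropy_nonneg[OF \<open>X \<noteq> {}\<close>] top_entropy_le_induced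
    by (intro ereal_zero_or_infinity_if_contracted[of _ "top_entropy U f" "M / (M + 1)"])
      (auto simp: field_simps)
qed

end

lemma (in invertible_system) first_return_system_if_clopen:
  assumes minimal: "\<forall>x\<in>X. closure (orbit X T x) = X"
    and "U \<noteq> {}" "U \<subset> X" "openin (top_of_set X) U" "closedin (top_of_set X) U"
  shows "\<exists>N M d. first_return_system X T S U N M d"
proof -
  have "U \<subseteq> X" using \<open>U \<subset> X\<close> by blast
  obtain N where "\<forall>x\<in>X. \<exists>j\<in>{1..N}. (T ^^ j) x \<in> U"
    using bounded_hitting_time[OF minimal \<open>openin (top_of_set X) U\<close> \<open>U \<noteq> {}\<close>] by blast
  obtain M where exit: "\<forall>x\<in>X. \<exists>j\<in>{1..M}. (T ^^ j) x \<in> X - U"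
    using bounded_hitting_time[OF minimal, of "X - U"] assms(3,5) by (auto simp: openin_diff)
  then have "\<forall>x\<in>X. \<exists>j\<le>M. (T ^^ j) x \<notin> U"
    by (meson Diff_iff atLeastAtMost_iff)
  obtain x where "x \<in> X" using \<open>U \<subseteq> X\<close> \<open>U \<noteq> {}\<close> by blast
  then obtain j where "j \<in> {1..M}" using exit by blast
  then have "1 \<le> M" by simp
  obtain d where "0 < d" "\<forall>x\<in>X. \<forall>y\<in>X. dist x y < d \<longrightarrow> (x \<in> U \<longleftrightarrow> y \<in> U)"
    using clopen_uniformly_isolated[OF compact assms(4,5)] by iprover
  have "first_return_system X T S U N M d"
    by unfold_locales fact+
  then show ?thesis by blast
qed

theorem mainTheorem7:
  fixes X :: "'a::metric_space set" and T :: "'a \<Rightarrow> 'a"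
  assumes "minimal_cantor_system X T"
    and "self_induced X T"
  shows "top_entropy X T = 0 \<or> top_entropy X T = \<infinity>"
proof -
  obtain S where "compact X" "X \<noteq> {}" "homeomorphism X X T S"
    and minimal: "\<forall>x\<in>X. closure (orbit X T x) = X"
    using assms(1) unfolding minimal_cantor_system_def cantor_set_def by auto
  interpret invertible_system X T S
    using \<open>compact X\<close> \<open>homeomorphism X X T S\<close> by unfold_locales
  obtain U where U: "U \<noteq> {}" "U \<subset> X" "openin (top_of_set X) U" "closedin (top_of_set X) U"
    and "top_conjugate U (induced_map U T) X T"
    using assms(2) unfolding self_induced_def by blast
  obtain N M d where "first_return_system X T S U N M d"
    using first_return_system_if_clopen[OF minimal U] by iprover
  then show ?thesis
    using \<open>top_conjugate U (induced_map U T) X T\<close> \<open>X \<noteq> {}\<close>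
    by (rule first_return_system.top_entropy_zero_or_infinity_if_conjugate)
qed

end
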